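(* Let $\hslash\in\mathbb{R}$ and let $a\in A_\hslash^\infty$. Then the commutator \[\left[\begin{bmatrix}\pi_\hslash(a)&0\\0&\pi_\hslash(a)\end{bmatrix},\ D\right],\qquad D=\begin{bmatrix}0&x-\frac{d}{dx}\\ x+\frac{d}{dx}&0\end{bmatrix},\] defined on $\mathcal{S}(\mathbb{R})\oplus\mathcal{S}(\mathbb{R})$, extends to a bounded operator on $L^2(\mathbb{R})\oplus L^2(\mathbb{R})$.
   Context: $\mathbb{T}=\mathbb{R}/\mathbb{Z}$. For $\hslash\in\mathbb{R}$, $A_\hslash=C(\mathbb{T})\rtimes_\hslash\mathbb{Z}$ is the crossed product C*-algebra for the action of $\mathbb{Z}$ on $\mathbb{T}$ generated by translation by $\hslash$ mod $\mathbb{Z}$; it is generated by unitaries $U$ (the function $U(t)=e^{2\pi i t}$) and $V$ (the generator of $\mathbb{Z}$), with $UV=e^{-2\pi i\hslash}VU$. The Schwartz subalgebra is $A_\hslash^\infty=\{\sum_{n,m}a_{nm}U^nV^m:\ \sum|a_{nm}|(1+n^2+m^2)^k<\infty\ \forall k\}$. The representation $\pi_\hslash:A_\hslash\to\mathbb{B}(L^2(\mathbb{R}))$ lets $f\in C(\mathbb{T})$ act as multiplication by $f$ regarded as a $1$-periodic function on $\mathbb{R}$, and $V$ act by $(V\xi)(x)=\xi(x-\hslash)$. $\mathcal{S}(\mathbb{R})$ is the Schwartz space; $x$ denotes the multiplication operator by the coordinate. *)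

theory Defs
  imports "HOL-Analysis.Analysis"
begin

definition vderiv :: "(real \<Rightarrow> complex) \<Rightarrow> real \<Rightarrow> complex" where
  "vderiv f = (\<lambda>x. vector_derivative f (at x))"

definition schwartz :: "(real \<Rightarrow> complex) \<Rightarrow> bool" where
  "schwartz f \<longleftrightarrow>
     (\<forall>n x. ((vderiv ^^ n) f) differentiable (at x)) \<and>
     (\<forall>k n. bounded (range (\<lambda>x. (complex_of_real x) ^ k * (vderiv ^^ n) f x)))"

text \<open>Coefficient arrays (a_nm) of elements a = sum a_nm U^n V^m of the smooth algebra A_h^infty.\<close>
definition rapid_decay :: "(int \<Rightarrow> int \<Rightarrow> complex) \<Rightarrow> bool" where
  "rapid_decay c \<longleftrightarrow>
     (\<forall>k::nat. (\<lambda>(n, m). norm (c n m) * (1 + (real_of_int n)^2 + (real_of_int m)^2) ^ k)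
                 summable_on UNIV)"

text \<open>pi_h(sum a_nm U^n V^m): U acts by multiplication by exp(2 pi i x), V by translation by h.\<close>
definition pi_rep :: "real \<Rightarrow> (int \<Rightarrow> int \<Rightarrow> complex) \<Rightarrow> (real \<Rightarrow> complex) \<Rightarrow> real \<Rightarrow> complex" where
  "pi_rep h c \<xi> x =
     infsum (\<lambda>(n, m). c n m * exp (2 * of_real pi * \<i> * of_int n * of_real x) * \<xi> (x - of_int m * h)) UNIV"

definition op_minus :: "(real \<Rightarrow> complex) \<Rightarrow> real \<Rightarrow> complex" where
  "op_minus \<xi> x = of_real x * \<xi> x - vderiv \<xi> x"

definition op_plus :: "(real \<Rightarrow> complex) \<Rightarrow> real \<Rightarrow> complex" where
  "op_plus \<xi> x = of_real x * \<xi> x + vderiv \<xi> x"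

definition commD :: "real \<Rightarrow> (int \<Rightarrow> int \<Rightarrow> complex) \<Rightarrow> (real \<Rightarrow> complex) \<Rightarrow> (real \<Rightarrow> complex)
                      \<Rightarrow> (real \<Rightarrow> complex) \<times> (real \<Rightarrow> complex)" where
  "commD h c \<xi> \<eta> =
     ((\<lambda>x. pi_rep h c (op_minus \<eta>) x - op_minus (pi_rep h c \<eta>) x),
      (\<lambda>x. pi_rep h c (op_plus \<xi>) x - op_plus (pi_rep h c \<xi>) x))"

end

(*
  Write a = sum c(n,m) U^n V^m. The commutators of the generators with the unbounded parts of D
  are again monomials: [V^m, x] = -m h V^m and [U^n, d/dx] = -2 pi i n U^n. Hence both entries
  of [diag(pi(a), pi(a)), D] are of the form pi(d) with d(n,m) = c(n,m) (-m h - 2 pi i s n) for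
  s = -1, 1, and these coefficients are absolutely summable by rapid decay. Finally pi(d) is
  bounded on L^2 with norm at most the l^1 norm of d: the operators U^n V^m are unitary, and
  summing them up only needs the pointwise Cauchy-Schwarz inequality with weights |d(n,m)| and
  the translation invariance of Lebesgue measure. Term-by-term differentiation and integration
  are justified by enumerating the index set Z x Z.
*)
theory Submission
  imports Defs
begin

lemma sums_from_nat_into_infsum:
  fixes F :: "'i \<Rightarrow> 'a::banach"
  assumes "countable (UNIV :: 'i set)" and "infinite (UNIV :: 'i set)"
    and "F abs_summable_on UNIV"
  shows "(\<lambda>j. F (from_nat_into UNIV j)) sums infsum F UNIV"
proof -
  have bij: "bij_betw (from_nat_into UNIV) (UNIV :: nat set) (UNIV :: 'i set)"
    using bij_betw_from_nat_into[OF assms(1,2)] .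
  have "((\<lambda>j. F (from_nat_into UNIV j)) has_sum infsum F UNIV) UNIV"
    using has_sum_reindex_bij_betw[OF bij] assms(3) abs_summable_summable has_sum_infsum by blast
  then show "(\<lambda>j. F (from_nat_into UNIV j)) sums infsum F UNIV"
    by (rule has_sum_imp_sums)
qed

lemma has_vector_derivative_series:
  fixes f f' :: "nat \<Rightarrow> real \<Rightarrow> 'a::banach"
  assumes deriv: "\<And>n x. (f n has_vector_derivative f' n x) (at x)"
    and bound: "\<And>n x. norm (f' n x) \<le> M n" and "summable M"
    and "summable (\<lambda>n. f n x0)"
  shows "((\<lambda>x. \<Sum>n. f n x) has_vector_derivative (\<Sum>n. f' n x)) (at x)"
proof -
  have unif: "uniform_limit UNIV (\<lambda>n x. \<Sum>i<n. f' i x) (\<lambda>x. \<Sum>i. f' i x) sequentially"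
    using bound \<open>summable M\<close> by (intro Weierstrass_m_test)
  have "\<exists>g. \<forall>x\<in>UNIV. (\<lambda>n. f n x) sums g x \<and>
          (g has_derivative (\<lambda>t. t *\<^sub>R (\<Sum>i. f' i x))) (at x within UNIV)"
  proof (rule has_derivative_series[where f' = "\<lambda>n x t. t *\<^sub>R f' n x"])
    show "(\<lambda>n. f n x0) sums (\<Sum>n. f n x0)"
      using \<open>summable (\<lambda>n. f n x0)\<close> by (rule summable_sums)
    show "\<forall>\<^sub>F n in sequentially. \<forall>x\<in>UNIV. \<forall>t.
            norm ((\<Sum>i<n. t *\<^sub>R f' i x) - t *\<^sub>R (\<Sum>i. f' i x)) \<le> e * norm t"
      if "e > 0" for e
      using uniform_limitD[OF unif that]
    proof eventually_elim
      case (elim n)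
      show ?case
      proof (intro ballI allI)
        fix x t
        have "norm ((\<Sum>i<n. t *\<^sub>R f' i x) - t *\<^sub>R (\<Sum>i. f' i x))
                = \<bar>t\<bar> * dist (\<Sum>i<n. f' i x) (\<Sum>i. f' i x)"
          by (simp add: dist_norm flip: scaleR_sum_right scaleR_diff_right)
        also have "\<dots> \<le> \<bar>t\<bar> * e"
          using elim by (intro mult_left_mono) (auto intro: less_imp_le)
        finally show "norm ((\<Sum>i<n. t *\<^sub>R f' i x) - t *\<^sub>R (\<Sum>i. f' i x)) \<le> e * norm t"
          by (simp add: mult.commute)
      qed
    qed
  qed (use deriv in \<open>auto simp: has_vector_derivative_def\<close>)
  then obtain g where "\<And>x. (\<lambda>n. f n x) sums g x"
    and "\<And>x. (g has_derivative (\<lambda>t. t *\<^sub>R (\<Sum>i. f' i x))) (at x)"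
    by auto
  then show ?thesis
    by (simp add: has_vector_derivative_def sums_iff)
qed

lemma suminf_ennreal_Cauchy_Schwarz:
  fixes f g :: "nat \<Rightarrow> ennreal"
  shows "(\<Sum>j. f j * g j)\<^sup>2 \<le> (\<Sum>j. f j ^ 2) * (\<Sum>j. g j ^ 2)"
  using Cauchy_Schwarz_nn_integral[of f "count_space UNIV" g]
  by (simp add: nn_integral_count_space_nat)

lemma nn_integral_translate_lborel:
  fixes f :: "real \<Rightarrow> ennreal"
  assumes [measurable]: "f \<in> borel_measurable borel"
  shows "(\<integral>\<^sup>+x. f (x - a) \<partial>lborel) = (\<integral>\<^sup>+x. f x \<partial>lborel)"
  using nn_integral_real_affine[of f 1 "- a"] by simp

lemma nn_integral_norm_series_translates_le:
  fixes t :: "nat \<Rightarrow> real \<Rightarrow> 'a::{banach, second_countable_topology}"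
    and \<eta> :: "real \<Rightarrow> 'b::real_normed_vector"
  assumes [measurable]: "\<And>j. t j \<in> borel_measurable borel" "\<eta> \<in> borel_measurable borel"
    and t_le: "\<And>j x. norm (t j x) \<le> w j * norm (\<eta> (x - \<tau> j))"
    and w_nonneg: "\<And>j. 0 \<le> w j" and "summable w"
    and \<eta>_bounded: "\<And>x. norm (\<eta> x) \<le> B"
  shows "(\<integral>\<^sup>+x. ennreal ((norm (\<Sum>j. t j x))\<^sup>2) \<partial>lborel)
           \<le> ennreal ((\<Sum>j. w j)\<^sup>2) * (\<integral>\<^sup>+x. ennreal ((norm (\<eta> x))\<^sup>2) \<partial>lborel)"
proof -
  define W where "W = ennreal (\<Sum>j. w j)"
  have W: "W = (\<Sum>j. ennreal (w j))"
    using suminf_ennreal2[OF w_nonneg \<open>summable w\<close>] by (simp add: W_def)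
  have pointwise: "ennreal ((norm (\<Sum>j. t j x))\<^sup>2)
                     \<le> W * (\<Sum>j. ennreal (w j * (norm (\<eta> (x - \<tau> j)))\<^sup>2))" for x
  proof -
    define a where "a j = norm (\<eta> (x - \<tau> j))" for j
    have "summable (\<lambda>j. norm (t j x))"
    proof (rule summable_comparison_test')
      show "summable (\<lambda>j. w j * B)" using \<open>summable w\<close> by (rule summable_mult2)
      show "norm (norm (t j x)) \<le> w j * B" for j
        using t_le[of j x] mult_left_mono[OF \<eta>_bounded w_nonneg[of j]] by (simp add: order_trans)
    qed
    then have "ennreal (norm (\<Sum>j. t j x)) \<le> ennreal (\<Sum>j. norm (t j x))"
      by (intro ennreal_leI summable_norm)
    also have "\<dots> = (\<Sum>j. ennreal (norm (t j x)))"
      using \<open>summable (\<lambda>j. norm (t j x))\<close> by (simp add: suminf_ennreal2)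
    also have "\<dots> \<le> (\<Sum>j. ennreal (sqrt (w j)) * ennreal (sqrt (w j) * a j))"
      using t_le w_nonneg
      by (intro suminf_le summableI) (simp add: a_def ennreal_leI flip: ennreal_mult mult.assoc)
    finally have "ennreal (norm (\<Sum>j. t j x)) ^ 2
        \<le> (\<Sum>j. ennreal (sqrt (w j)) * ennreal (sqrt (w j) * a j)) ^ 2"
      by (rule power_mono) simp
    also have "\<dots> \<le> (\<Sum>j. ennreal (sqrt (w j)) ^ 2) * (\<Sum>j. ennreal (sqrt (w j) * a j) ^ 2)"
      by (rule suminf_ennreal_Cauchy_Schwarz)
    also have "\<dots> = W * (\<Sum>j. ennreal (w j * (a j)\<^sup>2))"
      using w_nonneg by (simp add: W ennreal_power power_mult_distrib a_def)
    finally show ?thesis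
      by (simp add: ennreal_power a_def)
  qed
  have "(\<integral>\<^sup>+x. ennreal ((norm (\<Sum>j. t j x))\<^sup>2) \<partial>lborel)
          \<le> (\<integral>\<^sup>+x. W * (\<Sum>j. ennreal (w j * (norm (\<eta> (x - \<tau> j)))\<^sup>2)) \<partial>lborel)"
    by (intro nn_integral_mono pointwise)
  also have "\<dots> = W * (\<Sum>j. ennreal (w j) * (\<integral>\<^sup>+x. ennreal ((norm (\<eta> (x - \<tau> j)))\<^sup>2) \<partial>lborel))"
    using w_nonneg by (simp add: nn_integral_cmult nn_integral_suminf ennreal_mult)
  also have "\<dots> = W * W * (\<integral>\<^sup>+x. ennreal ((norm (\<eta> x))\<^sup>2) \<partial>lborel)"
  proof -
    have "(\<integral>\<^sup>+x. ennreal ((norm (\<eta> (x - \<tau> j)))\<^sup>2) \<partial>lborel)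
            = (\<integral>\<^sup>+x. ennreal ((norm (\<eta> x))\<^sup>2) \<partial>lborel)" for j
      by (rule nn_integral_translate_lborel[where f = "\<lambda>y. ennreal ((norm (\<eta> y))\<^sup>2)"]) measurable
    then show ?thesis by (simp add: W mult.assoc)
  qed
  also have "W * W = ennreal ((\<Sum>j. w j)\<^sup>2)"
    using suminf_nonneg[OF \<open>summable w\<close> w_nonneg] by (simp add: W_def power2_eq_square ennreal_mult)
  finally show ?thesis .
qed

lemma ennreal_mult_add_le:
  assumes "0 \<le> a" and "0 \<le> b"
  shows "ennreal a * X + ennreal b * Y \<le> ennreal (a + b) * (Y + X)"
proof -
  have "ennreal (a + b) * (Y + X) = (ennreal a * X + ennreal b * Y) + (ennreal a * Y + ennreal b * X)"
    using assms by (simp add: ennreal_plus distrib_left distrib_right ac_simps)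
  then show ?thesis
    by simp
qed

lemma nn_integral_sum_squares_le:
  fixes f g \<xi> \<eta> :: "'a \<Rightarrow> 'b::real_normed_vector"
  assumes [measurable]: "f \<in> borel_measurable M" "g \<in> borel_measurable M"
    "\<xi> \<in> borel_measurable M" "\<eta> \<in> borel_measurable M"
    and "0 \<le> a" "0 \<le> b"
    and "(\<integral>\<^sup>+x. ennreal ((norm (f x))\<^sup>2) \<partial>M) \<le> ennreal a * (\<integral>\<^sup>+x. ennreal ((norm (\<eta> x))\<^sup>2) \<partial>M)"
    and "(\<integral>\<^sup>+x. ennreal ((norm (g x))\<^sup>2) \<partial>M) \<le> ennreal b * (\<integral>\<^sup>+x. ennreal ((norm (\<xi> x))\<^sup>2) \<partial>M)"
  shows "(\<integral>\<^sup>+x. ennreal ((norm (f x))\<^sup>2 + (norm (g x))\<^sup>2) \<partial>M)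
           \<le> ennreal (a + b) * (\<integral>\<^sup>+x. ennreal ((norm (\<xi> x))\<^sup>2 + (norm (\<eta> x))\<^sup>2) \<partial>M)"
proof -
  have "(\<integral>\<^sup>+x. ennreal ((norm (f x))\<^sup>2 + (norm (g x))\<^sup>2) \<partial>M)
          = (\<integral>\<^sup>+x. ennreal ((norm (f x))\<^sup>2) \<partial>M) + (\<integral>\<^sup>+x. ennreal ((norm (g x))\<^sup>2) \<partial>M)"
    by (simp add: nn_integral_add ennreal_plus)
  also have "\<dots> \<le> ennreal (a + b)
                  * ((\<integral>\<^sup>+x. ennreal ((norm (\<xi> x))\<^sup>2) \<partial>M) + (\<integral>\<^sup>+x. ennreal ((norm (\<eta> x))\<^sup>2) \<partial>M))"
    using assms(5-) by (intro order_trans[OF add_mono ennreal_mult_add_le])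
  also have "\<dots> = ennreal (a + b) * (\<integral>\<^sup>+x. ennreal ((norm (\<xi> x))\<^sup>2 + (norm (\<eta> x))\<^sup>2) \<partial>M)"
    by (simp add: nn_integral_add ennreal_plus)
  finally show ?thesis .
qed

lemma schwartz_has_vector_derivative:
  assumes "schwartz \<eta>"
  shows "(\<eta> has_vector_derivative vderiv \<eta> x) (at x)"
proof -
  have "\<eta> differentiable (at x)"
    using assms unfolding schwartz_def by (metis funpow_0)
  then show ?thesis
    by (simp add: vderiv_def vector_derivative_works)
qed

lemma schwartz_continuous: "schwartz \<eta> \<Longrightarrow> continuous_on UNIV \<eta>"
  using schwartz_has_vector_derivative continuous_on_vector_derivative by blast

lemma schwartz_bounded:
  assumes "schwartz \<eta>"
  obtains B where "\<And>x. norm (of_real x ^ k * (vderiv ^^ n) \<eta> x) \<le> B"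
  using assms unfolding schwartz_def bounded_iff by blast

definition exp_2pi_i :: "int \<Rightarrow> real \<Rightarrow> complex" where
  "exp_2pi_i n x = exp (2 * of_real pi * \<i> * of_int n * of_real x)"

lemma norm_exp_2pi_i [simp]: "norm (exp_2pi_i n x) = 1"
  by (simp add: exp_2pi_i_def norm_exp_eq_Re)

lemma exp_2pi_i_has_vector_derivative:
  "(exp_2pi_i n has_vector_derivative 2 * of_real pi * \<i> * of_int n * exp_2pi_i n x) (at x)"
proof -
  have "((\<lambda>z. exp (2 * of_real pi * \<i> * of_int n * z)) has_field_derivative
          2 * of_real pi * \<i> * of_int n * exp_2pi_i n x) (at (of_real x))"
    by (auto simp: exp_2pi_i_def intro!: derivative_eq_intros)
  then show ?thesis
    unfolding exp_2pi_i_def [abs_def] by (rule has_vector_derivative_real_field)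
qed

lemma exp_2pi_i_measurable [measurable]: "exp_2pi_i n \<in> borel_measurable borel"
  unfolding exp_2pi_i_def by measurable

definition pi_term ::
    "real \<Rightarrow> (int \<Rightarrow> int \<Rightarrow> complex) \<Rightarrow> (real \<Rightarrow> complex) \<Rightarrow> int \<times> int \<Rightarrow> real \<Rightarrow> complex"
  where "pi_term h c \<xi> = (\<lambda>(n, m) x. c n m * exp_2pi_i n x * \<xi> (x - of_int m * h))"

lemma pi_term_Pair [simp]: "pi_term h c \<xi> (n, m) x = c n m * exp_2pi_i n x * \<xi> (x - of_int m * h)"
  by (simp add: pi_term_def)

lemma pi_rep_eq_infsum: "pi_rep h c \<xi> x = (\<Sum>\<^sub>\<infinity>p. pi_term h c \<xi> p x)"
  unfolding pi_rep_def pi_term_def exp_2pi_i_def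
  by (rule arg_cong[where f = "\<lambda>f. infsum f UNIV"]) auto

definition abs_summable_coeffs :: "(int \<Rightarrow> int \<Rightarrow> complex) \<Rightarrow> bool" where
  "abs_summable_coeffs c \<longleftrightarrow> (\<lambda>p. norm (case_prod c p)) summable_on UNIV"

definition l1_norm :: "(int \<Rightarrow> int \<Rightarrow> complex) \<Rightarrow> real" where
  "l1_norm c = (\<Sum>\<^sub>\<infinity>p. norm (case_prod c p))"

lemma norm_pi_term: "norm (pi_term h c \<xi> p x) = norm (case_prod c p) * norm (\<xi> (x - of_int (snd p) * h))"
  by (cases p) (simp add: norm_mult)

lemma pi_term_measurable [measurable]:
  "\<xi> \<in> borel_measurable borel \<Longrightarrow> pi_term h c \<xi> p \<in> borel_measurable borel"
  by (cases p) (simp add: pi_term_def, measurable)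

lemma pi_term_abs_summable:
  assumes "abs_summable_coeffs c" and "\<And>y. norm (\<xi> y) \<le> B"
  shows "(\<lambda>p. norm (pi_term h c \<xi> p x)) summable_on UNIV"
proof (rule Infinite_Sum.abs_summable_on_comparison_test')
  show "(\<lambda>p. norm (case_prod c p) * B) summable_on UNIV"
    using assms(1) unfolding abs_summable_coeffs_def by (rule summable_on_cmult_left)
  show "norm (pi_term h c \<xi> p x) \<le> norm (case_prod c p) * B" for p
    by (simp add: norm_pi_term mult_left_mono[OF assms(2)])
qed

lemma pi_rep_has_sum:
  assumes "abs_summable_coeffs c" and "\<And>y. norm (\<xi> y) \<le> B"
  shows "((\<lambda>p. pi_term h c \<xi> p x) has_sum pi_rep h c \<xi> x) UNIV"
  unfolding pi_rep_eq_infsum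
  by (rule has_sum_infsum[OF abs_summable_summable[OF pi_term_abs_summable[OF assms]]])

lemma pi_rep_sums:
  assumes "abs_summable_coeffs c" and "\<And>y. norm (\<xi> y) \<le> B"
  shows "(\<lambda>j. pi_term h c \<xi> (from_nat_into UNIV j) x) sums pi_rep h c \<xi> x"
  unfolding pi_rep_eq_infsum
  by (rule sums_from_nat_into_infsum[OF _ _ pi_term_abs_summable[OF assms]])
     (simp_all add: infinite_UNIV_int finite_prod)

lemma l1_norm_sums:
  assumes "abs_summable_coeffs c"
  shows "(\<lambda>j. norm (case_prod c (from_nat_into UNIV j))) sums l1_norm c"
  unfolding l1_norm_def
  by (rule sums_from_nat_into_infsum)
     (use assms in \<open>simp_all add: abs_summable_coeffs_def infinite_UNIV_int finite_prod\<close>)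

definition deriv_coeffs :: "(int \<Rightarrow> int \<Rightarrow> complex) \<Rightarrow> int \<Rightarrow> int \<Rightarrow> complex" where
  "deriv_coeffs c n m = 2 * of_real pi * \<i> * of_int n * c n m"

lemma pi_term_has_vector_derivative:
  assumes "\<And>y. (\<eta> has_vector_derivative \<eta>' y) (at y)"
  shows "(pi_term h c \<eta> p has_vector_derivative
           pi_term h (deriv_coeffs c) \<eta> p x + pi_term h c \<eta>' p x) (at x)"
proof (cases p)
  case (Pair n m)
  have "((\<lambda>y. y - of_int m * h) has_vector_derivative 1) (at x)"
    by (auto intro!: derivative_eq_intros)
  from vector_diff_chain_at[OF this assms]
  have shift: "((\<lambda>y. \<eta> (y - of_int m * h)) has_vector_derivative \<eta>' (x - of_int m * h)) (at x)"
    by (simp add: o_def)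
  have "((\<lambda>y. c n m * exp_2pi_i n y * \<eta> (y - of_int m * h)) has_vector_derivative
          c n m * exp_2pi_i n x * \<eta>' (x - of_int m * h)
          + c n m * (2 * of_real pi * \<i> * of_int n * exp_2pi_i n x) * \<eta> (x - of_int m * h)) (at x)"
    by (intro has_vector_derivative_mult has_vector_derivative_mult_right
        exp_2pi_i_has_vector_derivative shift)
  then show ?thesis
    unfolding Pair pi_term_def by (simp add: deriv_coeffs_def algebra_simps)
qed

lemma pi_rep_has_vector_derivative:
  assumes c: "abs_summable_coeffs c"
    and dc: "abs_summable_coeffs (deriv_coeffs c)"
    and deriv: "\<And>y. (\<eta> has_vector_derivative \<eta>' y) (at y)"
    and \<eta>_bounded: "\<And>y. norm (\<eta> y) \<le> B" and \<eta>'_bounded: "\<And>y. norm (\<eta>' y) \<le> B'"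
  shows "(pi_rep h c \<eta> has_vector_derivative
           pi_rep h (deriv_coeffs c) \<eta> x + pi_rep h c \<eta>' x) (at x)"
proof -
  define e :: "nat \<Rightarrow> int \<times> int" where "e = from_nat_into UNIV"
  define M where "M j = norm (case_prod (deriv_coeffs c) (e j)) * B + norm (case_prod c (e j)) * B'" for j
  have "summable M"
    unfolding M_def e_def
    using l1_norm_sums[OF c] l1_norm_sums[OF dc]
    by (intro summable_add summable_mult2) (auto dest: sums_summable)
  moreover have "norm (pi_term h (deriv_coeffs c) \<eta> (e j) y + pi_term h c \<eta>' (e j) y) \<le> M j" for j y
  proof (rule order_trans[OF norm_triangle_ineq])
    show "norm (pi_term h (deriv_coeffs c) \<eta> (e j) y) + norm (pi_term h c \<eta>' (e j) y) \<le> M j"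
      unfolding M_def norm_pi_term
      by (intro add_mono mult_left_mono \<eta>_bounded \<eta>'_bounded norm_ge_zero)
  qed
  moreover have "summable (\<lambda>j. pi_term h c \<eta> (e j) 0)"
    using pi_rep_sums[where \<xi> = \<eta>, OF c \<eta>_bounded] by (auto simp: e_def dest: sums_summable)
  ultimately have "((\<lambda>y. \<Sum>j. pi_term h c \<eta> (e j) y) has_vector_derivative
                     (\<Sum>j. pi_term h (deriv_coeffs c) \<eta> (e j) x + pi_term h c \<eta>' (e j) x)) (at x)"
    using pi_term_has_vector_derivative[OF deriv] by (intro has_vector_derivative_series)
  moreover have "(\<lambda>y. \<Sum>j. pi_term h c \<eta> (e j) y) = pi_rep h c \<eta>"
    using pi_rep_sums[where \<xi> = \<eta>, OF c \<eta>_bounded] by (auto simp: e_def sums_iff)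
  moreover have "(\<Sum>j. pi_term h (deriv_coeffs c) \<eta> (e j) x + pi_term h c \<eta>' (e j) x) = pi_rep h (deriv_coeffs c) \<eta> x + pi_rep h c \<eta>' x"
    using sums_add[OF pi_rep_sums[where \<xi> = \<eta>, OF dc \<eta>_bounded]
        pi_rep_sums[where \<xi> = \<eta>', OF c \<eta>'_bounded]]
    by (simp add: e_def sums_iff)
  ultimately show ?thesis
    by simp
qed

lemma pi_rep_L2_bound:
  assumes c: "abs_summable_coeffs c" and [measurable]: "\<xi> \<in> borel_measurable borel"
    and \<xi>_bounded: "\<And>x. norm (\<xi> x) \<le> B"
  shows "pi_rep h c \<xi> \<in> borel_measurable borel"
    and "(\<integral>\<^sup>+x. ennreal ((norm (pi_rep h c \<xi> x))\<^sup>2) \<partial>lborel)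
           \<le> ennreal ((l1_norm c)\<^sup>2) * (\<integral>\<^sup>+x. ennreal ((norm (\<xi> x))\<^sup>2) \<partial>lborel)"
proof -
  define e :: "nat \<Rightarrow> int \<times> int" where "e = from_nat_into UNIV"
  have pi_rep: "pi_rep h c \<xi> = (\<lambda>x. \<Sum>j. pi_term h c \<xi> (e j) x)"
    using pi_rep_sums[where \<xi> = \<xi>, OF c \<xi>_bounded] by (auto simp: e_def sums_iff)
  have l1: "(\<lambda>j. norm (case_prod c (e j))) sums l1_norm c"
    unfolding e_def by (rule l1_norm_sums[OF c])
  show "pi_rep h c \<xi> \<in> borel_measurable borel"
    unfolding pi_rep by measurable
  show "(\<integral>\<^sup>+x. ennreal ((norm (pi_rep h c \<xi> x))\<^sup>2) \<partial>lborel)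
          \<le> ennreal ((l1_norm c)\<^sup>2) * (\<integral>\<^sup>+x. ennreal ((norm (\<xi> x))\<^sup>2) \<partial>lborel)"
    unfolding pi_rep sums_unique[OF l1]
    by (rule nn_integral_norm_series_translates_le[where \<tau> = "\<lambda>j. of_int (snd (e j)) * h"])
       (use l1 \<xi>_bounded in \<open>auto simp: norm_pi_term sums_iff\<close>)
qed

lemma abs_le_one_plus_sum_squares:
  fixes a b :: real
  shows "\<bar>a\<bar> \<le> 1 + a\<^sup>2 + b\<^sup>2" and "\<bar>b\<bar> \<le> 1 + a\<^sup>2 + b\<^sup>2"
proof -
  have "2 * \<bar>a\<bar> \<le> a\<^sup>2 + 1" "2 * \<bar>b\<bar> \<le> b\<^sup>2 + 1"
    using zero_le_power2[of "\<bar>a\<bar> - 1"] zero_le_power2[of "\<bar>b\<bar> - 1"] by (simp_all add: power2_diff)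
  then show "\<bar>a\<bar> \<le> 1 + a\<^sup>2 + b\<^sup>2" and "\<bar>b\<bar> \<le> 1 + a\<^sup>2 + b\<^sup>2"
    using zero_le_power2[of a] zero_le_power2[of b] abs_ge_zero[of a] abs_ge_zero[of b] by linarith+
qed

lemma rapid_decay_weighted_abs_summable:
  assumes "rapid_decay c"
    and "\<And>n m. norm (w n m) \<le> K * (1 + (real_of_int n)\<^sup>2 + (real_of_int m)\<^sup>2) ^ k"
  shows "abs_summable_coeffs (\<lambda>n m. w n m * c n m)"
  unfolding abs_summable_coeffs_def
proof (rule summable_on_comparison_test)
  show "(\<lambda>p. K * (norm (case_prod c p) * (1 + (real_of_int (fst p))\<^sup>2 + (real_of_int (snd p))\<^sup>2) ^ k))
          summable_on UNIV"
    using assms(1) unfolding rapid_decay_def case_prod_unfold by (intro summable_on_cmult_right) simp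
  show "norm (case_prod (\<lambda>n m. w n m * c n m) p)
          \<le> K * (norm (case_prod c p) * (1 + (real_of_int (fst p))\<^sup>2 + (real_of_int (snd p))\<^sup>2) ^ k)" for p
    using mult_right_mono[OF assms(2)[of "fst p" "snd p"] norm_ge_zero[of "case_prod c p"]]
    by (simp add: case_prod_unfold norm_mult algebra_simps)
qed simp

lemma rapid_decay_abs_summable: "rapid_decay c \<Longrightarrow> abs_summable_coeffs c"
  using rapid_decay_weighted_abs_summable[of c "\<lambda>_ _. 1" 1 0] by simp

lemma rapid_decay_abs_summable_deriv_coeffs:
  assumes "rapid_decay c"
  shows "abs_summable_coeffs (deriv_coeffs c)"
  unfolding deriv_coeffs_def [abs_def]
proof (rule rapid_decay_weighted_abs_summable[OF assms, where K = "2 * pi" and k = 1])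
  show "norm (2 * of_real pi * \<i> * of_int n) \<le> 2 * pi * (1 + (real_of_int n)\<^sup>2 + (real_of_int m)\<^sup>2) ^ 1" for n m
    using abs_le_one_plus_sum_squares(1)[of "real_of_int n" "real_of_int m"] by (simp add: norm_mult)
qed

text \<open>The coefficients of the commutator [pi(a), x + s d/dx].\<close>
definition commutator_coeffs ::
    "real \<Rightarrow> (int \<Rightarrow> int \<Rightarrow> complex) \<Rightarrow> complex \<Rightarrow> int \<Rightarrow> int \<Rightarrow> complex"
  where "commutator_coeffs h c s n m = (- of_real (of_int m * h) - s * (2 * of_real pi * \<i> * of_int n)) * c n m"

lemma rapid_decay_abs_summable_commutator_coeffs:
  assumes "rapid_decay c"
  shows "abs_summable_coeffs (commutator_coeffs h c s)"
  unfolding commutator_coeffs_def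
proof (rule rapid_decay_weighted_abs_summable[OF assms, where K = "\<bar>h\<bar> + 2 * pi * norm s" and k = 1])
  fix n m :: int
  have "norm (- of_real (of_int m * h) - s * (2 * of_real pi * \<i> * of_int n))
          \<le> \<bar>h\<bar> * \<bar>real_of_int m\<bar> + 2 * pi * norm s * \<bar>real_of_int n\<bar>"
    by (rule order_trans[OF norm_triangle_ineq4]) (simp add: norm_mult abs_mult)
  also have "\<dots> \<le> \<bar>h\<bar> * (1 + (real_of_int n)\<^sup>2 + (real_of_int m)\<^sup>2)
                    + 2 * pi * norm s * (1 + (real_of_int n)\<^sup>2 + (real_of_int m)\<^sup>2)"
    by (intro add_mono mult_left_mono abs_le_one_plus_sum_squares) auto
  also have "\<dots> = (\<bar>h\<bar> + 2 * pi * norm s) * (1 + (real_of_int n)\<^sup>2 + (real_of_int m)\<^sup>2)"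
    by (simp add: distrib_right)
  finally show "norm (- of_real (of_int m * h) - s * (2 * of_real pi * \<i> * of_int n))
                  \<le> (\<bar>h\<bar> + 2 * pi * norm s) * (1 + (real_of_int n)\<^sup>2 + (real_of_int m)\<^sup>2) ^ 1"
    by simp
qed

lemma pi_term_commutator:
  "pi_term h c (\<lambda>y. of_real y * \<eta> y + s * \<eta>' y) p x
     = pi_term h (commutator_coeffs h c s) \<eta> p x
       + (of_real x * pi_term h c \<eta> p x + s * (pi_term h (deriv_coeffs c) \<eta> p x + pi_term h c \<eta>' p x))"
  by (cases p) (simp add: commutator_coeffs_def deriv_coeffs_def algebra_simps)

lemma vderiv_pi_rep:
  assumes c: "rapid_decay c" and \<eta>: "schwartz \<eta>"
  shows "vderiv (pi_rep h c \<eta>) x = pi_rep h (deriv_coeffs c) \<eta> x + pi_rep h c (vderiv \<eta>) x"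
proof -
  obtain B where "\<And>y. norm (\<eta> y) \<le> B"
    using schwartz_bounded[OF \<eta>, of 0 0] by auto
  moreover obtain B' where "\<And>y. norm (vderiv \<eta> y) \<le> B'"
    using schwartz_bounded[OF \<eta>, of 0 1] by auto
  ultimately show ?thesis
    unfolding vderiv_def [of "pi_rep h c \<eta>"]
    by (intro vector_derivative_at pi_rep_has_vector_derivative[OF rapid_decay_abs_summable[OF c]
          rapid_decay_abs_summable_deriv_coeffs[OF c] schwartz_has_vector_derivative[OF \<eta>]])
qed

lemma pi_rep_commutator:
  assumes c: "rapid_decay c" and \<eta>: "schwartz \<eta>"
  shows "pi_rep h c (\<lambda>y. of_real y * \<eta> y + s * vderiv \<eta> y) x
           - (of_real x * pi_rep h c \<eta> x + s * vderiv (pi_rep h c \<eta>) x)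
         = pi_rep h (commutator_coeffs h c s) \<eta> x"
proof -
  note c_abs = rapid_decay_abs_summable[OF c]
    and d_abs = rapid_decay_abs_summable_deriv_coeffs[OF c]
    and cs_abs = rapid_decay_abs_summable_commutator_coeffs[OF c]
  obtain B where B: "\<And>y. norm (\<eta> y) \<le> B"
    using schwartz_bounded[OF \<eta>, of 0 0] by auto
  obtain B1 where B1: "\<And>y. norm (of_real y * \<eta> y) \<le> B1"
    using schwartz_bounded[OF \<eta>, of 1 0] by auto
  obtain B' where B': "\<And>y. norm (vderiv \<eta> y) \<le> B'"
    using schwartz_bounded[OF \<eta>, of 0 1] by auto
  have "norm (of_real y * \<eta> y + s * vderiv \<eta> y) \<le> B1 + norm s * B'" for y
  proof (rule order_trans[OF norm_triangle_ineq])
    show "norm (of_real y * \<eta> y) + norm (s * vderiv \<eta> y) \<le> B1 + norm s * B'"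
      unfolding norm_mult[of s] by (intro add_mono B1 mult_left_mono B' norm_ge_zero)
  qed
  then have "((\<lambda>p. pi_term h c (\<lambda>y. of_real y * \<eta> y + s * vderiv \<eta> y) p x) has_sum
               pi_rep h c (\<lambda>y. of_real y * \<eta> y + s * vderiv \<eta> y) x) UNIV"
    by (rule pi_rep_has_sum[OF c_abs])
  moreover have "((\<lambda>p. pi_term h c (\<lambda>y. of_real y * \<eta> y + s * vderiv \<eta> y) p x) has_sum
                    pi_rep h (commutator_coeffs h c s) \<eta> x
                      + (of_real x * pi_rep h c \<eta> x + s * vderiv (pi_rep h c \<eta>) x)) UNIV"
    unfolding pi_term_commutator vderiv_pi_rep[OF c \<eta>]
    by (intro has_sum_add has_sum_cmult_right
        pi_rep_has_sum[where \<xi> = \<eta>, OF cs_abs B] pi_rep_has_sum[where \<xi> = \<eta>, OF c_abs B]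
        pi_rep_has_sum[where \<xi> = \<eta>, OF d_abs B] pi_rep_has_sum[where \<xi> = "vderiv \<eta>", OF c_abs B'])
  ultimately show ?thesis
    by (simp add: has_sum_unique diff_eq_eq)
qed

lemma fst_commD:
  assumes "rapid_decay c" and "schwartz \<eta>"
  shows "fst (commD h c \<xi> \<eta>) = pi_rep h (commutator_coeffs h c (-1)) \<eta>"
proof
  fix x
  have "op_minus \<eta> = (\<lambda>y. of_real y * \<eta> y + (-1) * vderiv \<eta> y)"
    by (simp add: op_minus_def [abs_def])
  with pi_rep_commutator[OF assms, of h "-1" x]
  show "fst (commD h c \<xi> \<eta>) x = pi_rep h (commutator_coeffs h c (-1)) \<eta> x"
    by (simp add: commD_def op_minus_def)
qed

lemma snd_commD:
  assumes "rapid_decay c" and "schwartz \<xi>"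
  shows "snd (commD h c \<xi> \<eta>) = pi_rep h (commutator_coeffs h c 1) \<xi>"
proof
  fix x
  have "op_plus \<xi> = (\<lambda>y. of_real y * \<xi> y + 1 * vderiv \<xi> y)"
    by (simp add: op_plus_def [abs_def])
  with pi_rep_commutator[OF assms, of h 1 x]
  show "snd (commD h c \<xi> \<eta>) x = pi_rep h (commutator_coeffs h c 1) \<xi> x"
    by (simp add: commD_def op_plus_def)
qed

lemma pi_rep_schwartz_L2_bound:
  assumes "abs_summable_coeffs c" and "schwartz \<xi>"
  shows "pi_rep h c \<xi> \<in> borel_measurable borel"
    and "(\<integral>\<^sup>+x. ennreal ((norm (pi_rep h c \<xi> x))\<^sup>2) \<partial>lborel)
           \<le> ennreal ((l1_norm c)\<^sup>2) * (\<integral>\<^sup>+x. ennreal ((norm (\<xi> x))\<^sup>2) \<partial>lborel)"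
proof -
  obtain B where "\<And>x. norm (\<xi> x) \<le> B"
    using schwartz_bounded[OF assms(2), of 0 0] by auto
  moreover have "\<xi> \<in> borel_measurable borel"
    using schwartz_continuous[OF assms(2)] by (rule borel_measurable_continuous_onI)
  ultimately show "pi_rep h c \<xi> \<in> borel_measurable borel"
    and "(\<integral>\<^sup>+x. ennreal ((norm (pi_rep h c \<xi> x))\<^sup>2) \<partial>lborel)
           \<le> ennreal ((l1_norm c)\<^sup>2) * (\<integral>\<^sup>+x. ennreal ((norm (\<xi> x))\<^sup>2) \<partial>lborel)"
    using pi_rep_L2_bound[OF assms(1)] by blast+
qed

lemma fst_commD_L2_bound:
  assumes "rapid_decay c" and "schwartz \<eta>"
  shows "fst (commD h c \<xi> \<eta>) \<in> borel_measurable borel"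
    and "(\<integral>\<^sup>+x. ennreal ((cmod (fst (commD h c \<xi> \<eta>) x))\<^sup>2) \<partial>lborel)
           \<le> ennreal ((l1_norm (commutator_coeffs h c (-1)))\<^sup>2) * (\<integral>\<^sup>+x. ennreal ((cmod (\<eta> x))\<^sup>2) \<partial>lborel)"
  unfolding fst_commD[OF assms]
  by (rule pi_rep_schwartz_L2_bound[OF rapid_decay_abs_summable_commutator_coeffs[OF assms(1)] assms(2)])+

lemma snd_commD_L2_bound:
  assumes "rapid_decay c" and "schwartz \<xi>"
  shows "snd (commD h c \<xi> \<eta>) \<in> borel_measurable borel"
    and "(\<integral>\<^sup>+x. ennreal ((cmod (snd (commD h c \<xi> \<eta>) x))\<^sup>2) \<partial>lborel)
           \<le> ennreal ((l1_norm (commutator_coeffs h c 1))\<^sup>2) * (\<integral>\<^sup>+x. ennreal ((cmod (\<xi> x))\<^sup>2) \<partial>lborel)"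
  unfolding snd_commD[OF assms]
  by (rule pi_rep_schwartz_L2_bound[OF rapid_decay_abs_summable_commutator_coeffs[OF assms(1)] assms(2)])+

theorem mainTheorem1:
  fixes h :: real and c :: "int \<Rightarrow> int \<Rightarrow> complex"
  assumes "rapid_decay c"
  shows "\<exists>C\<ge>0. \<forall>\<xi> \<eta>. schwartz \<xi> \<longrightarrow> schwartz \<eta> \<longrightarrow>
           fst (commD h c \<xi> \<eta>) \<in> borel_measurable lborel \<and>
           snd (commD h c \<xi> \<eta>) \<in> borel_measurable lborel \<and>
           (\<integral>\<^sup>+ x. ennreal ((cmod (fst (commD h c \<xi> \<eta>) x))^2 + (cmod (snd (commD h c \<xi> \<eta>) x))^2) \<partial>lborel)
             \<le> ennreal C * (\<integral>\<^sup>+ x. ennreal ((cmod (\<xi> x))^2 + (cmod (\<eta> x))^2) \<partial>lborel)"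
proof (intro exI[of _ "(l1_norm (commutator_coeffs h c (-1)))\<^sup>2 + (l1_norm (commutator_coeffs h c 1))\<^sup>2"]
    conjI allI impI)
  fix \<xi> \<eta> assume \<xi>: "schwartz \<xi>" and \<eta>: "schwartz \<eta>"
  note fst = fst_commD_L2_bound[OF assms \<eta>, of h \<xi>] and snd = snd_commD_L2_bound[OF assms \<xi>, of h \<eta>]
  show "fst (commD h c \<xi> \<eta>) \<in> borel_measurable lborel" "snd (commD h c \<xi> \<eta>) \<in> borel_measurable lborel"
    using fst(1) snd(1) by simp_all
  have "\<xi> \<in> borel_measurable lborel" "\<eta> \<in> borel_measurable lborel"
    using \<xi> \<eta> by (simp_all add: schwartz_continuous borel_measurable_continuous_onI)
  with fst snd show "(\<integral>\<^sup>+ x. ennreal ((cmod (fst (commD h c \<xi> \<eta>) x))^2 + (cmod (snd (commD h c \<xi> \<eta>) x))^2) \<partial>lborel)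
      \<le> ennreal ((l1_norm (commutator_coeffs h c (-1)))\<^sup>2 + (l1_norm (commutator_coeffs h c 1))\<^sup>2)
         * (\<integral>\<^sup>+ x. ennreal ((cmod (\<xi> x))^2 + (cmod (\<eta> x))^2) \<partial>lborel)"
    by (intro nn_integral_sum_squares_le) simp_all
qed simp

end
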